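(* Let $s\geq 2$ and let $a,b$ be positive integers with $\operatorname{lcm}(a,b)=s$. In $G_{(s,0)}$, the subgroup $\langle u^a,v^b\rangle$ is core-free of index $6ab$; hence $G_{(s,0)}$ has a faithful transitive permutation representation of degree $6ab$.
   Context: $G_{(s,0)}$ is the group of the toroidal hypermap $(3,3,3)_{(s,0)}$: the Coxeter group $[3,3,3]=\langle\rho_0,\rho_1,\rho_2\mid \rho_i^2=1,\ (\rho_i\rho_j)^3=1\ (i\neq j)\rangle$ factored by $(\rho_0\rho_1\rho_2\rho_1)^s$; it has order $6s^2$. Here $u=\rho_0\rho_1\rho_2\rho_1$ and $v=\rho_1u\rho_1=\rho_1\rho_0\rho_1\rho_2$ generate the abelian normal translation subgroup $T=\langle u,v\rangle\cong C_s\times C_s$. A subgroup is core-free if it contains no nontrivial normal subgroup of the group. *)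

theory Defs
  imports "HOL-Algebra.Algebra"
begin

text \<open>The hypermap group G_(s,0), built literally from its presentation
  [3,3,3] / ((rho0 rho1 rho2 rho1)^s): elements are classes of words in the
  generators rho0, rho1, rho2 modulo the congruence generated by the relators.\<close>

datatype gen = R0 | R1 | R2

inductive wrel :: "nat \<Rightarrow> gen list \<Rightarrow> gen list \<Rightarrow> bool" for s :: nat where
  involution: "wrel s [i, i] []"
| braid: "i \<noteq> j \<Longrightarrow> wrel s (concat (replicate 3 [i, j])) []"
| extra: "wrel s (concat (replicate s [R0, R1, R2, R1])) []"
| refl: "wrel s w w"
| sym: "wrel s w w' \<Longrightarrow> wrel s w' w"
| trans: "wrel s w w' \<Longrightarrow> wrel s w' w'' \<Longrightarrow> wrel s w w''"
| cong: "wrel s w w' \<Longrightarrow> wrel s (p @ w @ q) (p @ w' @ q)"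

definition wclass :: "nat \<Rightarrow> gen list \<Rightarrow> gen list set" where
  "wclass s w = {w'. wrel s w w'}"

definition Gs0 :: "nat \<Rightarrow> gen list set monoid" where
  "Gs0 s = \<lparr> carrier = range (wclass s),
             monoid.mult = (\<lambda>A B. {w. \<exists>a\<in>A. \<exists>b\<in>B. wrel s (a @ b) w}),
             one = wclass s [] \<rparr>"

definition u_el :: "nat \<Rightarrow> gen list set" where
  "u_el s = wclass s [R0, R1, R2, R1]"

definition v_el :: "nat \<Rightarrow> gen list set" where
  "v_el s = wclass s [R1, R0, R1, R2]"

definition core_free :: "('a, 'b) monoid_scheme \<Rightarrow> 'a set \<Rightarrow> bool" where
  "core_free G H \<longleftrightarrow> (\<forall>N. N \<lhd> G \<longrightarrow> N \<subseteq> H \<longrightarrow> N = {\<one>\<^bsub>G\<^esub>})"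

end

theory Submission
  imports Defs
begin

(* The translations u and v commute and have order s, and together with the six elements of the
   stabiliser <rho1, rho2> = S_3 they give the normal form u^x v^y sigma (0 <= x, y < s): every word
   can be rewritten into it, and a right action of words on Z_s x Z_s x S_3 that respects the
   relators separates the normal forms, so |G| = 6 s^2.  The subgroup <u^a, v^b> is the lattice
   {u^x v^y : a | x, b | y} of order (s/a)(s/b), hence of index 6ab.  Conjugation by rho1 swaps
   u and v, so a normal subgroup inside the lattice consists of elements u^x v^y with both a and b
   dividing both x and y; as lcm(a, b) = s, it is trivial.  The permutation representation is the
   action on the cosets, whose kernel is the core. *)

section \<open>Actions on cosets and their transport\<close>

definition coset_action :: "('a, 'b) monoid_scheme \<Rightarrow> 'a set \<Rightarrow> 'a \<Rightarrow> 'a set \<Rightarrow> 'a set" where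
  "coset_action G H g = (\<lambda>c \<in> (rcosets\<^bsub>G\<^esub> H). r_coset G c (inv\<^bsub>G\<^esub> g))"

context group
begin

lemma coset_action_rcoset:
  assumes "subgroup H G" "g \<in> carrier G" "x \<in> carrier G"
  shows "coset_action G H g (H #> x) = H #> (x \<otimes> inv g)"
  using assms by (simp add: coset_action_def rcosetsI subgroup.subset coset_mult_assoc)

lemma coset_action_group_action:
  assumes H: "subgroup H G"
  shows "group_action G (rcosets H) (coset_action G H)"
proof -
  let ?a = "coset_action G H"
  have Hc: "H \<subseteq> carrier G" using H by (rule subgroup.subset)
  have act: "?a g (H #> x) = H #> (x \<otimes> inv g)"
    if "g \<in> carrier G" "x \<in> carrier G" for g x
    using coset_action_rcoset[OF H that] .
  have mem: "?a g c \<in> rcosets H" if "g \<in> carrier G" "c \<in> rcosets H" for g c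
    using that by (auto simp: RCOSETS_def act Hc intro!: rcosetsI)
  have comp: "?a (g \<otimes> h) = compose (rcosets H) (?a g) (?a h)"
    if "g \<in> carrier G" "h \<in> carrier G" for g h
  proof (rule ext)
    fix c show "?a (g \<otimes> h) c = compose (rcosets H) (?a g) (?a h) c"
    proof (cases "c \<in> rcosets H")
      case True
      then obtain x where x: "x \<in> carrier G" "c = H #> x" by (auto simp: RCOSETS_def)
      then show ?thesis using that by (simp add: compose_def act inv_mult_group m_assoc rcosetsI Hc)
    qed (simp add: coset_action_def compose_def)
  qed
  have bij: "?a g \<in> Bij (rcosets H)" if g: "g \<in> carrier G" for g
  proof -
    have "bij_betw (?a g) (rcosets H) (rcosets H)"
    proof (rule bij_betw_byWitness[where f' = "?a (inv g)"])
      show "\<forall>c\<in>rcosets H. ?a (inv g) (?a g c) = c"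
        using g by (auto simp: RCOSETS_def act m_assoc Hc)
      show "\<forall>c\<in>rcosets H. ?a g (?a (inv g) c) = c"
        using g by (auto simp: RCOSETS_def act m_assoc Hc)
    qed (use g mem in auto)
    then show ?thesis by (simp add: Bij_def coset_action_def)
  qed
  show ?thesis
    unfolding group_action_def group_hom_def group_hom_axioms_def
  proof (intro conjI is_group group_BijGroup homI)
    show "?a g \<in> carrier (BijGroup (rcosets H))" if "g \<in> carrier G" for g
      using bij[OF that] by (simp add: BijGroup_def)
    show "?a (g \<otimes> h) = ?a g \<otimes>\<^bsub>BijGroup (rcosets H)\<^esub> ?a h"
      if "g \<in> carrier G" "h \<in> carrier G" for g h
      using that bij by (simp add: BijGroup_def comp)
  qed
qed

lemma coset_action_transitive:
  assumes H: "subgroup H G"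
  shows "transitive_action G (rcosets H) (coset_action G H)"
proof (intro transitive_action.intro transitive_action_axioms.intro coset_action_group_action[OF H])
  fix c d assume "c \<in> rcosets H" "d \<in> rcosets H"
  then obtain x y where xy: "x \<in> carrier G" "y \<in> carrier G" "c = H #> x" "d = H #> y"
    by (auto simp: RCOSETS_def)
  then have "coset_action G H (inv y \<otimes> x) c = d"
    using coset_action_rcoset[OF H] by (simp add: inv_mult_group m_assoc[symmetric])
  then show "\<exists>g\<in>carrier G. coset_action G H g c = d" using xy by blast
qed

lemma coset_action_kernel_subset:
  assumes H: "subgroup H G"
  shows "kernel G (BijGroup (rcosets H)) (coset_action G H) \<subseteq> H"
proof
  fix g assume "g \<in> kernel G (BijGroup (rcosets H)) (coset_action G H)"
  then have g: "g \<in> carrier G" and triv: "coset_action G H g = (\<lambda>c \<in> rcosets H. c)"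
    by (auto simp: kernel_def BijGroup_def)
  have Hc: "H \<subseteq> carrier G" using H by (rule subgroup.subset)
  have "H #> inv g = coset_action G H g (H #> \<one>)"
    using coset_action_rcoset[OF H g one_closed] g by simp
  also have "\<dots> = H" using triv rcosetsI[OF Hc one_closed] Hc by simp
  finally have "H #> inv g = H" .
  then have "inv g \<in> H" using coset_join1 H g by blast
  then show "g \<in> H" using H g by (metis inv_inv subgroup.m_inv_closed)
qed

lemma coset_action_faithful:
  assumes H: "subgroup H G" and "core_free G H"
  shows "faithful_action G (rcosets H) (coset_action G H)"
proof (intro faithful_action.intro faithful_action_axioms.intro coset_action_group_action[OF H])
  interpret group_action G "rcosets H" "coset_action G H" by (rule coset_action_group_action[OF H])
  have "kernel G (BijGroup (rcosets H)) (coset_action G H) = {\<one>}"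
    using assms(2) group_hom.normal_kernel[OF group_hom] coset_action_kernel_subset[OF H]
    by (simp add: core_free_def)
  then show "inj_on (coset_action G H) (carrier G)" by (rule group_hom.trivial_ker_imp_inj[OF group_hom])
qed

end

definition transport_action :: "('c \<Rightarrow> 'd) \<Rightarrow> 'c set \<Rightarrow> ('a \<Rightarrow> 'c \<Rightarrow> 'c) \<Rightarrow> 'a \<Rightarrow> 'd \<Rightarrow> 'd" where
  "transport_action f E \<phi> g = (\<lambda>y \<in> f ` E. f (\<phi> g (inv_into E f y)))"

sublocale group_action \<subseteq> group G
  by (rule group_hom.axioms(1)[OF group_hom])

context group_action
begin

lemma transport_action_image:
  "inj_on f E \<Longrightarrow> x \<in> E \<Longrightarrow> transport_action f E \<phi> g (f x) = f (\<phi> g x)"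
  by (simp add: transport_action_def)

lemma action_inv_cancel:
  assumes "g \<in> carrier G" "x \<in> E"
  shows "\<phi> (inv g) (\<phi> g x) = x"
  using assms composition_rule[of x "inv g" g] id_eq_one by (metis l_inv inv_closed restrict_apply')

lemma action_closed: "g \<in> carrier G \<Longrightarrow> x \<in> E \<Longrightarrow> \<phi> g x \<in> E"
  using element_image by blast

lemma group_action_transport:
  assumes f: "inj_on f E"
  shows "group_action G (f ` E) (transport_action f E \<phi>)"
proof -
  let ?T = "transport_action f E \<phi>"
  have img: "?T g (f x) = f (\<phi> g x)" if "x \<in> E" for g x
    using transport_action_image[OF f that] .
  have bij: "?T g \<in> Bij (f ` E)" if g: "g \<in> carrier G" for g
  proof -
    have "bij_betw (?T g) (f ` E) (f ` E)"
    proof (rule bij_betw_byWitness[where f' = "?T (inv g)"])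
      show "\<forall>y\<in>f ` E. ?T (inv g) (?T g y) = y"
        using g by (auto simp: img action_closed action_inv_cancel)
      show "\<forall>y\<in>f ` E. ?T g (?T (inv g) y) = y"
        using g action_inv_cancel[of "inv g"] by (auto simp: img action_closed)
    qed (use g in \<open>auto simp: img action_closed\<close>)
    then show ?thesis by (simp add: Bij_def transport_action_def)
  qed
  show ?thesis
    unfolding group_action_def group_hom_def group_hom_axioms_def
  proof (intro conjI group_hom.axioms(1)[OF group_hom] group_BijGroup homI)
    show "?T g \<in> carrier (BijGroup (f ` E))" if "g \<in> carrier G" for g
      using bij[OF that] by (simp add: BijGroup_def)
    fix g h assume gh: "g \<in> carrier G" "h \<in> carrier G"
    have "?T (g \<otimes> h) = compose (f ` E) (?T g) (?T h)"
    proof (rule ext)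
      fix y show "?T (g \<otimes> h) y = compose (f ` E) (?T g) (?T h) y"
        using gh by (cases "y \<in> f ` E")
          (auto simp: compose_def img action_closed composition_rule, simp add: transport_action_def)
    qed
    then show "?T (g \<otimes> h) = ?T g \<otimes>\<^bsub>BijGroup (f ` E)\<^esub> ?T h"
      using gh bij by (simp add: BijGroup_def)
  qed
qed

end

lemma (in faithful_action) faithful_action_transport:
  assumes f: "inj_on f E"
  shows "faithful_action G (f ` E) (transport_action f E \<phi>)"
proof (intro faithful_action.intro faithful_action_axioms.intro group_action_transport[OF f] inj_onI)
  fix g h assume gh: "g \<in> carrier G" "h \<in> carrier G"
    and eq: "transport_action f E \<phi> g = transport_action f E \<phi> h"
  have "\<phi> g x = \<phi> h x" if "x \<in> E" for x
    using fun_cong[OF eq, of "f x"] that gh f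
    by (simp add: transport_action_image action_closed inj_on_eq_iff)
  then have "\<phi> g = \<phi> h"
    using gh bij_prop0 Bij_imp_extensional by (meson extensionalityI)
  then show "g = h"
    using faithful gh by (meson inj_on_eq_iff)
qed

lemma (in transitive_action) transitive_action_transport:
  assumes f: "inj_on f E"
  shows "transitive_action G (f ` E) (transport_action f E \<phi>)"
proof (intro transitive_action.intro transitive_action_axioms.intro group_action_transport[OF f])
  fix y z assume "y \<in> f ` E" "z \<in> f ` E"
  then obtain x x' where "x \<in> E" "x' \<in> E" "y = f x" "z = f x'" by blast
  then show "\<exists>g\<in>carrier G. transport_action f E \<phi> g y = z"
    using unique_orbit transport_action_image[OF f] by metis
qed

lemma nat_mod_add:
  assumes "0 < s"
  shows "nat ((x + y) mod int s) = (nat (x mod int s) + nat (y mod int s)) mod s"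
proof -
  have "(x + y) mod int s = (x mod int s + y mod int s) mod int s" by (simp add: mod_add_eq)
  then show ?thesis using assms by (simp add: nat_mod_distrib nat_add_distrib)
qed

lemma dvd_nonneg_less_imp_zero: "(m::int) dvd x \<Longrightarrow> 0 \<le> x \<Longrightarrow> x < m \<Longrightarrow> x = 0"
  using zdvd_imp_le by force

lemma int_dvd_imp_dvd_nat: "int m dvd z \<Longrightarrow> m dvd nat z"
  by (metis dvd_0_right int_dvd_int_iff int_nat_eq)

lemma nat_mod_multiple_index:
  assumes "0 < s" "m dvd s" "int m dvd x"
  obtains i where "i < s div m" "nat (x mod int s) = m * i"
proof -
  have "m dvd nat (x mod int s)"
    using assms by (intro int_dvd_imp_dvd_nat) (simp add: dvd_mod_iff)
  then obtain i where i: "nat (x mod int s) = m * i" by (elim dvdE)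
  have "nat (x mod int s) < s" using assms(1) by (simp add: nat_less_iff)
  then have "m * i < m * (s div m)" using i assms(2) by simp
  then show ?thesis using that i by simp
qed

lemma mult_less_of_less_div: "(m::nat) dvd s \<Longrightarrow> i < s div m \<Longrightarrow> m * i < s"
  by (metis div_0 dvd_mult_div_cancel dvd_pos_nat gr_zeroI mult.commute mult_less_mono1 not_less_zero)

section \<open>Words modulo the defining relations\<close>

declare wrel.trans[trans]

definition wpow :: "gen list \<Rightarrow> nat \<Rightarrow> gen list" where
  "wpow w n = concat (replicate n w)"

lemma wpow_add: "wpow w (m + n) = wpow w m @ wpow w n"
  by (simp add: wpow_def replicate_add)

lemma wrel_cancel_pair: "wrel s (p @ i # i # q) (p @ q)"
  using wrel.cong[OF wrel.involution[of s i], of p q] by simp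

lemma wrel_braid_triple:
  assumes "i \<noteq> j"
  shows "wrel s [i,j,i] [j,i,j]"
proof -
  have "wrel s [i,j,i,j,i,j,j,i,j] [j,i,j]"
    using wrel.cong[OF wrel.braid[OF assms, of s], of "[]" "[j,i,j]"] by (simp add: numeral_eq_Suc)
  moreover have "wrel s [i,j,i,j,i,j,j,i,j] [i,j,i]"
  proof -
    have "wrel s [i,j,i,j,i,j,j,i,j] [i,j,i,j,i,i,j]"
      using wrel_cancel_pair[of s "[i,j,i,j,i]" j "[i,j]"] by simp
    also have "wrel s \<dots> [i,j,i,j,j]" using wrel_cancel_pair[of s "[i,j,i,j]" i "[j]"] by simp
    also have "wrel s \<dots> [i,j,i]" using wrel_cancel_pair[of s "[i,j,i]" j "[]"] by simp
    finally show ?thesis .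
  qed
  ultimately show ?thesis by (meson wrel.sym wrel.trans)
qed

lemma wrel_braid: "i \<noteq> j \<Longrightarrow> wrel s (p @ i # j # i # q) (p @ j # i # j # q)"
  using wrel.cong[OF wrel_braid_triple, of i j s p q] by simp

lemma wrel_append: "wrel s a a' \<Longrightarrow> wrel s b b' \<Longrightarrow> wrel s (a @ b) (a' @ b')"
  using wrel.cong[of s a a' "[]" b] wrel.cong[of s b b' a' "[]"] by (simp add: wrel.trans)

lemma wrel_append_left: "wrel s b b' \<Longrightarrow> wrel s (a @ b) (a @ b')"
  by (rule wrel_append[OF wrel.refl])

lemma wrel_append_right: "wrel s a a' \<Longrightarrow> wrel s (a @ b) (a' @ b)"
  by (rule wrel_append[OF _ wrel.refl])

lemma wrel_append_rev: "wrel s (w @ rev w) []"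
proof (induction w)
  case (Cons g w)
  have "wrel s ([g] @ (w @ rev w) @ [g]) ([g] @ [] @ [g])" by (rule wrel.cong[OF Cons])
  also have "wrel s \<dots> []" using wrel_cancel_pair[of s "[]" g "[]"] by simp
  finally show ?case by simp
qed (simp add: wrel.refl)

lemma wrel_rev_append: "wrel s (rev w @ w) []"
  using wrel_append_rev[of s "rev w"] by simp

lemma wpow_mod:
  assumes "wrel s (wpow w s) []"
  shows "wrel s (wpow w n) (wpow w (n mod s))"
proof -
  have period: "wrel s (wpow w (s * q)) []" for q
  proof (induction q)
    case (Suc q)
    have "wrel s (wpow w s @ wpow w (s * q)) ([] @ [])" by (rule wrel_append[OF assms Suc.IH])
    then show ?case by (simp add: wpow_add)
  qed (simp add: wpow_def wrel.refl)
  have "wpow w n = wpow w (s * (n div s)) @ wpow w (n mod s)" by (simp flip: wpow_add)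
  also have "wrel s \<dots> ([] @ wpow w (n mod s))" by (rule wrel_append_right[OF period])
  finally show ?thesis by simp
qed

lemma rev_wpow:
  assumes "wrel s (wpow w s) []" "0 < s"
  shows "wrel s (rev w) (wpow w (s - 1))"
proof -
  have "wpow w s @ rev w = wpow w (s - 1) @ (w @ rev w)"
    using wpow_add[of w "s - 1" 1] assms(2) by (simp add: wpow_def)
  moreover have "wrel s (rev w) (wpow w s @ rev w)"
    using wrel.sym[OF wrel_append_right[OF assms(1), where b = "rev w"]] by simp
  moreover have "wrel s (wpow w (s - 1) @ (w @ rev w)) (wpow w (s - 1) @ [])"
    by (rule wrel_append_left[OF wrel_append_rev])
  ultimately show ?thesis by (metis append_Nil2 wrel.trans)
qed

definition uw :: "gen list" where "uw = [R0, R1, R2, R1]"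
definition vw :: "gen list" where "vw = [R1, R0, R1, R2]"

lemma uw_vw_commute: "wrel s (uw @ vw) (vw @ uw)"
proof -
  have "wrel s [R0,R1,R2,R1,R1,R0,R1,R2] [R0,R1,R2,R0,R1,R2]"
    using wrel_cancel_pair[of s "[R0,R1,R2]" R1 "[R0,R1,R2]"] by simp
  also have "wrel s \<dots> [R0,R1,R2,R0,R1,R2,R1,R1]"
    using wrel.sym[OF wrel_cancel_pair[of s "[R0,R1,R2,R0,R1,R2]" R1 "[]"]] by simp
  also have "wrel s \<dots> [R0,R1,R2,R0,R2,R1,R2,R1]"
    using wrel.sym[OF wrel_braid[of R2 R1 s "[R0,R1,R2,R0]" "[R1]"]] by simp
  also have "wrel s \<dots> [R0,R1,R0,R2,R0,R1,R2,R1]"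
    using wrel.sym[OF wrel_braid[of R0 R2 s "[R0,R1]" "[R1,R2,R1]"]] by simp
  also have "wrel s \<dots> [R1,R0,R1,R2,R0,R1,R2,R1]"
    using wrel.sym[OF wrel_braid[of R1 R0 s "[]" "[R2,R0,R1,R2,R1]"]] by simp
  finally show ?thesis by (simp add: uw_def vw_def)
qed

lemma wpow_vw_commute_uw: "wrel s (wpow vw n @ uw) (uw @ wpow vw n)"
proof (induction n)
  case (Suc n)
  have "wrel s (vw @ (wpow vw n @ uw)) (vw @ (uw @ wpow vw n))" by (rule wrel_append_left[OF Suc.IH])
  also have "wrel s \<dots> ((uw @ vw) @ wpow vw n)"
    using wrel_append_right[OF wrel.sym[OF uw_vw_commute], where b = "wpow vw n"] by simp
  finally show ?case by (simp add: wpow_def)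
qed (simp add: wpow_def wrel.refl)

lemma wpow_vw_uw_commute: "wrel s (wpow vw n @ wpow uw m) (wpow uw m @ wpow vw n)"
proof (induction m)
  case (Suc m)
  have "wrel s ((wpow vw n @ uw) @ wpow uw m) ((uw @ wpow vw n) @ wpow uw m)"
    by (rule wrel_append_right[OF wpow_vw_commute_uw])
  also have "wrel s \<dots> (uw @ (wpow uw m @ wpow vw n))"
    using wrel_append_left[OF Suc.IH, where a = uw] by simp
  finally show ?case by (simp add: wpow_def)
qed (simp add: wpow_def wrel.refl)

lemma wpow_vw_conj: "wrel s (wpow vw n) ([R1] @ wpow uw n @ [R1])"
proof (induction n)
  case 0
  show ?case using wrel.sym[OF wrel_cancel_pair[of s "[]" R1 "[]"]] by (simp add: wpow_def)
next
  case (Suc n)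
  have v: "wrel s vw ([R1] @ uw @ [R1])"
    using wrel.sym[OF wrel_cancel_pair[of s "[R1,R0,R1,R2]" R1 "[]"]] by (simp add: vw_def uw_def)
  have "wrel s (vw @ wpow vw n) (([R1] @ uw @ [R1]) @ ([R1] @ wpow uw n @ [R1]))"
    by (rule wrel_append[OF v Suc.IH])
  also have "wrel s \<dots> ([R1] @ (uw @ wpow uw n) @ [R1])"
    using wrel_cancel_pair[of s "[R1] @ uw" R1 "wpow uw n @ [R1]"] by simp
  finally show ?case by (simp add: wpow_def)
qed

lemma uw_period: "wrel s (wpow uw s) []"
  using wrel.extra[of s] by (simp add: wpow_def uw_def)

lemma vw_period: "wrel s (wpow vw s) []"
proof -
  have "wrel s (wpow vw s) ([R1] @ wpow uw s @ [R1])" by (rule wpow_vw_conj)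
  also have "wrel s \<dots> ([R1] @ [] @ [R1])" by (rule wrel_append_left[OF wrel_append_right[OF uw_period]])
  also have "wrel s \<dots> []" using wrel_cancel_pair[of s "[]" R1 "[]"] by simp
  finally show ?thesis .
qed

definition uv_word :: "nat \<Rightarrow> int \<Rightarrow> int \<Rightarrow> gen list" where
  "uv_word s x y = wpow uw (nat (x mod int s)) @ wpow vw (nat (y mod int s))"

lemma uv_word_mult:
  assumes "0 < s"
  shows "wrel s (uv_word s x y @ uv_word s x' y') (uv_word s (x + x') (y + y'))"
proof -
  let ?m = "nat (x mod int s)" and ?m' = "nat (x' mod int s)"
  let ?n = "nat (y mod int s)" and ?n' = "nat (y' mod int s)"
  have "uv_word s x y @ uv_word s x' y' = wpow uw ?m @ (wpow vw ?n @ wpow uw ?m') @ wpow vw ?n'"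
    by (simp add: uv_word_def)
  also have "wrel s \<dots> (wpow uw ?m @ (wpow uw ?m' @ wpow vw ?n) @ wpow vw ?n')"
    by (rule wrel_append_left[OF wrel_append_right[OF wpow_vw_uw_commute]])
  also have "\<dots> = wpow uw (?m + ?m') @ wpow vw (?n + ?n')" by (simp add: wpow_add)
  also have "wrel s \<dots> (wpow uw ((?m + ?m') mod s) @ wpow vw ((?n + ?n') mod s))"
    by (rule wrel_append[OF wpow_mod[OF uw_period] wpow_mod[OF vw_period]])
  also have "\<dots> = uv_word s (x + x') (y + y')" using assms by (simp add: uv_word_def nat_mod_add)
  finally show ?thesis .
qed

lemma uw_eq_uv_word: "0 < s \<Longrightarrow> wrel s uw (uv_word s 1 0)"
  using wpow_mod[OF uw_period, of s 1] by (simp add: uv_word_def wpow_def nat_mod_distrib)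

lemma vw_eq_uv_word: "0 < s \<Longrightarrow> wrel s vw (uv_word s 0 1)"
  using wpow_mod[OF vw_period, of s 1] by (simp add: uv_word_def wpow_def nat_mod_distrib)

lemma rev_uw_eq_uv_word: "0 < s \<Longrightarrow> wrel s (rev uw) (uv_word s (-1) 0)"
  using rev_wpow[OF uw_period, of s] by (simp add: uv_word_def wpow_def zmod_minus1 nat_diff_distrib)

lemma rev_vw_eq_uv_word: "0 < s \<Longrightarrow> wrel s (rev vw) (uv_word s 0 (-1))"
  using rev_wpow[OF vw_period, of s] by (simp add: uv_word_def wpow_def zmod_minus1 nat_diff_distrib)

(* The stabiliser <rho1, rho2> consists of the six elements sigma_k = stab_word k, with
   sigma_k rho_i = sigma_(stab_Ri ! k) for i = 1, 2.  Conjugating u by sigma_k gives the translation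
   stab_conj_uw k, whose coordinates in the basis u, v are (u_shift_x ! k, u_shift_y ! k);
   v_shift plays the same role for v. *)
definition stab_word :: "nat \<Rightarrow> gen list" where
  "stab_word k = [[], [R1], [R2], [R1, R2], [R2, R1], [R1, R2, R1]] ! k"

definition stab_R1 :: "nat list" where "stab_R1 = [1, 0, 4, 5, 2, 3]"
definition stab_R2 :: "nat list" where "stab_R2 = [2, 3, 0, 1, 5, 4]"

definition stab_conj_uw :: "nat \<Rightarrow> gen list" where
  "stab_conj_uw k = [uw, vw, uw @ rev vw, rev uw @ vw, rev vw, rev uw] ! k"

definition u_shift_x :: "int list" where "u_shift_x = [1, 0, 1, -1, 0, -1]"
definition u_shift_y :: "int list" where "u_shift_y = [0, 1, -1, 1, -1, 0]"
definition v_shift_x :: "int list" where "v_shift_x = [0, 1, 0, -1, 1, -1]"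
definition v_shift_y :: "int list" where "v_shift_y = [1, 0, -1, 0, -1, 1]"

lemmas coordinate_tables = stab_word_def stab_R1_def stab_R2_def stab_conj_uw_def
  u_shift_x_def u_shift_y_def v_shift_x_def v_shift_y_def

lemma less_6_cases: "(k::nat) < 6 \<Longrightarrow> k = 0 \<or> k = 1 \<or> k = 2 \<or> k = 3 \<or> k = 4 \<or> k = 5"
  by auto

lemma stab_word_R1:
  assumes "k < 6"
  shows "wrel s (stab_word k @ [R1]) (stab_word (stab_R1 ! k))"
  using less_6_cases[OF assms] wrel_cancel_pair[of s "[]" R1 "[]"] wrel_cancel_pair[of s "[R2]" R1 "[]"]
    wrel_cancel_pair[of s "[R1,R2]" R1 "[]"]
  by (elim disjE) (simp_all add: coordinate_tables wrel.refl)

lemma stab_word_R2: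
  assumes "k < 6"
  shows "wrel s (stab_word k @ [R2]) (stab_word (stab_R2 ! k))"
proof -
  have "wrel s [R1,R2,R1,R2] [R2,R1]"
    using wrel_braid[of R1 R2 s "[]" "[R2]"] wrel_cancel_pair[of s "[R2,R1]" R2 "[]"]
    by (auto intro: wrel.trans)
  then show ?thesis
    using less_6_cases[OF assms] wrel_cancel_pair[of s "[]" R2 "[]"] wrel_cancel_pair[of s "[R1]" R2 "[]"]
      wrel.sym[OF wrel_braid[of R1 R2 s "[]" "[]"]]
    by (elim disjE) (simp_all add: coordinate_tables wrel.refl)
qed

lemma stab_word_R1R2R1:
  assumes "k < 6"
  shows "wrel s (stab_word k @ [R1,R2,R1]) (stab_word (5 - k))"
proof -
  have "wrel s [R2,R1,R2,R1] [R1,R2]"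
    using wrel_braid[of R2 R1 s "[]" "[R1]"] wrel_cancel_pair[of s "[R1,R2]" R1 "[]"]
    by (auto intro: wrel.trans)
  moreover have "wrel s [R1,R2,R1,R2,R1] [R2]"
    using wrel_braid[of R1 R2 s "[]" "[R2,R1]"] wrel_cancel_pair[of s "[R2,R1]" R2 "[R1]"]
      wrel_cancel_pair[of s "[R2]" R1 "[]"]
    by (auto intro: wrel.trans)
  moreover have "wrel s [R2,R1,R1,R2,R1] [R1]"
    using wrel_cancel_pair[of s "[R2]" R1 "[R2,R1]"] wrel_cancel_pair[of s "[]" R2 "[R1]"]
    by (auto intro: wrel.trans)
  moreover have "wrel s [R1,R2,R1,R1,R2,R1] []"
    using wrel_cancel_pair[of s "[R1,R2]" R1 "[R2,R1]"] wrel_cancel_pair[of s "[R1]" R2 "[R1]"]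
      wrel_cancel_pair[of s "[]" R1 "[]"]
    by (auto intro: wrel.trans)
  ultimately show ?thesis
    using less_6_cases[OF assms] wrel_cancel_pair[of s "[]" R1 "[R2,R1]"]
    by (elim disjE) (simp_all add: coordinate_tables wrel.refl)
qed

lemma stab_word_uw:
  assumes "k < 6"
  shows "wrel s (stab_word k @ uw) (stab_conj_uw k @ stab_word k)"
proof -
  have "wrel s [R2,R0,R1,R2,R1] [R0,R1,R2,R1,R2,R1,R0,R1,R2]"
  proof -
    have "wrel s [R2,R0,R1,R2,R1] [R2,R0,R2,R1,R2]"
      using wrel.sym[OF wrel_braid[of R2 R1 s "[R2,R0]" "[]"]] by simp
    also have "wrel s \<dots> [R0,R2,R0,R1,R2]"
      using wrel.sym[OF wrel_braid[of R0 R2 s "[]" "[R1,R2]"]] by simp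
    also have "wrel s \<dots> [R0,R2,R1,R1,R0,R1,R2]"
      using wrel.sym[OF wrel_cancel_pair[of s "[R0,R2]" R1 "[R0,R1,R2]"]] by simp
    also have "wrel s \<dots> [R0,R2,R1,R2,R2,R1,R0,R1,R2]"
      using wrel.sym[OF wrel_cancel_pair[of s "[R0,R2,R1]" R2 "[R1,R0,R1,R2]"]] by simp
    also have "wrel s \<dots> [R0,R1,R2,R1,R2,R1,R0,R1,R2]"
      using wrel.sym[OF wrel_braid[of R1 R2 s "[R0]" "[R2,R1,R0,R1,R2]"]] by simp
    finally show ?thesis .
  qed
  moreover have "wrel s [R1,R2,R0,R1,R2,R1] [R1,R2,R1,R0,R1,R0,R1,R2,R1,R2]"
  proof -
    have "wrel s [R1,R2,R0,R1,R2,R1] [R1,R2,R0,R2,R1,R2]"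
      using wrel.sym[OF wrel_braid[of R2 R1 s "[R1,R2,R0]" "[]"]] by simp
    also have "wrel s \<dots> [R1,R2,R0,R1,R1,R2,R1,R2]"
      using wrel.sym[OF wrel_cancel_pair[of s "[R1,R2,R0]" R1 "[R2,R1,R2]"]] by simp
    also have "wrel s \<dots> [R1,R2,R0,R1,R0,R0,R1,R2,R1,R2]"
      using wrel.sym[OF wrel_cancel_pair[of s "[R1,R2,R0,R1]" R0 "[R1,R2,R1,R2]"]] by simp
    also have "wrel s \<dots> [R1,R2,R1,R0,R1,R0,R1,R2,R1,R2]"
      using wrel.sym[OF wrel_braid[of R1 R0 s "[R1,R2]" "[R0,R1,R2,R1,R2]"]] by simp
    finally show ?thesis .
  qed
  ultimately show ?thesis
    using less_6_cases[OF assms] by (elim disjE) (simp_all add: coordinate_tables uw_def vw_def wrel.refl)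
qed

lemma stab_word_R0:
  assumes "k < 6"
  shows "wrel s (stab_word k @ [R0]) (stab_conj_uw k @ stab_word (5 - k))"
proof -
  have "wrel s [R0] (uw @ [R1,R2,R1])"
    using wrel_cancel_pair[of s "[R0]" R1 "[]"] wrel_cancel_pair[of s "[R0,R1]" R2 "[R1]"]
      wrel_cancel_pair[of s "[R0,R1,R2]" R1 "[R2,R1]"]
    by (simp add: uw_def) (meson wrel.trans wrel.sym)
  then have "wrel s (stab_word k @ [R0]) ((stab_word k @ uw) @ [R1,R2,R1])"
    using wrel_append_left[where a = "stab_word k"] by simp
  also have "wrel s \<dots> (stab_conj_uw k @ stab_word k @ [R1,R2,R1])"
    using wrel_append_right[OF stab_word_uw[OF assms], where b = "[R1,R2,R1]"] by simp
  also have "wrel s \<dots> (stab_conj_uw k @ stab_word (5 - k))"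
    by (rule wrel_append_left[OF stab_word_R1R2R1[OF assms]])
  finally show ?thesis .
qed

lemma stab_conj_uw_eq_uv_word:
  assumes s: "0 < s" and "k < 6"
  shows "wrel s (stab_conj_uw k) (uv_word s (u_shift_x ! k) (u_shift_y ! k))"
proof -
  have "wrel s (uw @ rev vw) (uv_word s (1 + 0) (0 + -1))"
    by (rule wrel.trans[OF wrel_append[OF uw_eq_uv_word[OF s] rev_vw_eq_uv_word[OF s]] uv_word_mult[OF s]])
  moreover have "wrel s (rev uw @ vw) (uv_word s (-1 + 0) (0 + 1))"
    by (rule wrel.trans[OF wrel_append[OF rev_uw_eq_uv_word[OF s] vw_eq_uv_word[OF s]] uv_word_mult[OF s]])
  ultimately show ?thesis
    using less_6_cases[OF assms(2)] uw_eq_uv_word[OF s] vw_eq_uv_word[OF s]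
      rev_uw_eq_uv_word[OF s] rev_vw_eq_uv_word[OF s]
    by (elim disjE) (simp_all add: coordinate_tables)
qed

section \<open>Coordinates and normal forms\<close>

(* A state (x, y, k) stands for u^x v^y sigma_k, and step s multiplies it on the right by a
   generator, using rho0 = u rho1 rho2 rho1 and sigma_k rho1 rho2 rho1 = sigma_(5 - k).  For s = 0
   nothing is reduced (x mod 0 = x): these integer walks are where the relators are checked. *)
fun step :: "nat \<Rightarrow> int \<times> int \<times> nat \<Rightarrow> gen \<Rightarrow> int \<times> int \<times> nat" where
  "step s (x, y, k) R0 = ((x + u_shift_x ! k) mod int s, (y + u_shift_y ! k) mod int s, 5 - k)"
| "step s (x, y, k) R1 = (x, y, stab_R1 ! k)"
| "step s (x, y, k) R2 = (x, y, stab_R2 ! k)"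

definition states :: "nat \<Rightarrow> (int \<times> int \<times> nat) set" where
  "states s = {0..<int s} \<times> {0..<int s} \<times> {..<6}"

fun reduce :: "nat \<Rightarrow> int \<times> int \<times> nat \<Rightarrow> int \<times> int \<times> nat" where
  "reduce s (x, y, k) = (x mod int s, y mod int s, k)"

lemma step_states:
  assumes "0 < s" "st \<in> states s"
  shows "step s st g \<in> states s"
proof -
  obtain x y k where st: "st = (x, y, k)" by (cases st)
  then have "k < 6" using assms(2) by (simp add: states_def)
  then have "stab_R1 ! k < 6" "stab_R2 ! k < 6"
    by (auto dest!: less_6_cases simp: stab_R1_def stab_R2_def)
  then show ?thesis using assms st by (cases g) (auto simp: states_def)
qed

lemma walk_states: "0 < s \<Longrightarrow> st \<in> states s \<Longrightarrow> foldl (step s) st w \<in> states s"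
  by (induction w arbitrary: st) (simp_all add: step_states)

lemma step_reduce: "step s (reduce s st) g = reduce s (step 0 st g)"
  by (cases st; cases g) (simp_all add: mod_add_left_eq)

lemma walk_reduce: "foldl (step s) (reduce s st) w = reduce s (foldl (step 0) st w)"
  by (induction w arbitrary: st) (simp_all add: step_reduce)

lemma reduce_states: "st \<in> states s \<Longrightarrow> reduce s st = st"
  by (cases st) (auto simp: states_def)

lemma walk_states_reduce: "st \<in> states s \<Longrightarrow> foldl (step s) st w = reduce s (foldl (step 0) st w)"
  using walk_reduce[of s st w] by (simp add: reduce_states)

lemma walk_involution: "k < 6 \<Longrightarrow> foldl (step 0) (x, y, k) [i, i] = (x, y, k)"
  by (drule less_6_cases, cases i) (auto simp: coordinate_tables)

lemma walk_braid: "k < 6 \<Longrightarrow> i \<noteq> j \<Longrightarrow> foldl (step 0) (x, y, k) [i, j, i, j, i, j] = (x, y, k)"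
  by (drule less_6_cases, cases i; cases j) (auto simp: coordinate_tables)

lemma walk_wpow_uw:
  "k < 6 \<Longrightarrow>
    foldl (step 0) (x, y, k) (wpow uw n) = (x + int n * u_shift_x ! k, y + int n * u_shift_y ! k, k)"
proof (induction n arbitrary: x y)
  case (Suc n)
  have "foldl (step 0) (x, y, k) uw = (x + u_shift_x ! k, y + u_shift_y ! k, k)"
    using less_6_cases[OF Suc.prems] by (auto simp: uw_def coordinate_tables)
  then show ?case using Suc by (simp add: wpow_def algebra_simps)
qed (simp add: wpow_def)

lemma walk_wpow_vw:
  "k < 6 \<Longrightarrow>
    foldl (step 0) (x, y, k) (wpow vw n) = (x + int n * v_shift_x ! k, y + int n * v_shift_y ! k, k)"
proof (induction n arbitrary: x y)
  case (Suc n)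
  have "foldl (step 0) (x, y, k) vw = (x + v_shift_x ! k, y + v_shift_y ! k, k)"
    using less_6_cases[OF Suc.prems] by (auto simp: vw_def coordinate_tables)
  then show ?case using Suc by (simp add: wpow_def algebra_simps)
qed (simp add: wpow_def)

lemma wrel_walk_eq:
  assumes "wrel s w w'" "0 < s" "st \<in> states s"
  shows "foldl (step s) st w = foldl (step s) st w'"
  using assms
proof (induction arbitrary: st rule: wrel.induct)
  case (involution i)
  obtain x y k where st: "st = (x, y, k)" and "k < 6" using involution.prems(2) by (auto simp: states_def)
  then show ?case using involution.prems(2)
    by (simp add: walk_states_reduce walk_involution reduce_states del: foldl_Cons reduce.simps)
next
  case (braid i j)
  obtain x y k where st: "st = (x, y, k)" and "k < 6" using braid.prems(2) by (auto simp: states_def)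
  then show ?case using braid
    by (simp add: walk_states_reduce walk_braid reduce_states numeral_eq_Suc del: foldl_Cons reduce.simps)
next
  case extra
  obtain x y k where st: "st = (x, y, k)" and "k < 6" using extra.prems(2) by (auto simp: states_def)
  then have "foldl (step s) st (wpow uw s) = reduce s (x + int s * u_shift_x ! k, y + int s * u_shift_y ! k, k)"
    using extra.prems(2) by (simp add: walk_states_reduce walk_wpow_uw del: reduce.simps)
  also have "\<dots> = st" using extra.prems(2) st by (auto simp: states_def)
  finally show ?case by (simp add: wpow_def uw_def)
next
  case (cong w w' p q)
  then show ?case using walk_states[OF cong.prems(1,2), of p] by simp
qed (simp_all add: wrel.refl)

definition coords :: "nat \<Rightarrow> gen list \<Rightarrow> int \<times> int \<times> nat" where
  "coords s w = foldl (step s) (0, 0, 0) w"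

fun normal_word :: "nat \<Rightarrow> int \<times> int \<times> nat \<Rightarrow> gen list" where
  "normal_word s (x, y, k) = uv_word s x y @ stab_word k"

lemma coords_states: "0 < s \<Longrightarrow> coords s w \<in> states s"
  unfolding coords_def by (rule walk_states) (simp_all add: states_def)

lemma normal_word_step:
  assumes "0 < s" "st \<in> states s"
  shows "wrel s (normal_word s st @ [g]) (normal_word s (step s st g))"
proof -
  obtain x y k where st: "st = (x, y, k)" and k: "k < 6" using assms(2) by (auto simp: states_def)
  show ?thesis
  proof (cases g)
    case R0
    have "wrel s (uv_word s x y @ stab_word k @ [R0]) (uv_word s x y @ stab_conj_uw k @ stab_word (5 - k))"
      by (rule wrel_append_left[OF stab_word_R0[OF k]])
    also have "wrel s \<dots> ((uv_word s x y @ uv_word s (u_shift_x ! k) (u_shift_y ! k)) @ stab_word (5 - k))"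
      using wrel_append_left[OF wrel_append_right[OF stab_conj_uw_eq_uv_word[OF assms(1) k]]] by simp
    also have "wrel s \<dots> (uv_word s (x + u_shift_x ! k) (y + u_shift_y ! k) @ stab_word (5 - k))"
      by (rule wrel_append_right[OF uv_word_mult[OF assms(1)]])
    finally show ?thesis using st R0 by (simp add: uv_word_def)
  next
    case R1
    then show ?thesis using st wrel_append_left[OF stab_word_R1[OF k], of s "uv_word s x y"] by simp
  next
    case R2
    then show ?thesis using st wrel_append_left[OF stab_word_R2[OF k], of s "uv_word s x y"] by simp
  qed
qed

lemma wrel_normal_word_coords: "0 < s \<Longrightarrow> wrel s w (normal_word s (coords s w))"
proof (induction w rule: rev_induct)
  case Nil
  show ?case by (simp add: coords_def uv_word_def wpow_def stab_word_def wrel.refl)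
next
  case (snoc g w)
  have "wrel s (w @ [g]) (normal_word s (coords s w) @ [g])"
    by (rule wrel_append_right[OF snoc.IH[OF snoc.prems]])
  also have "wrel s \<dots> (normal_word s (coords s (w @ [g])))"
    using normal_word_step[OF snoc.prems coords_states[OF snoc.prems]] by (simp add: coords_def)
  finally show ?case .
qed

lemma coords_normal_word: "st \<in> states s \<Longrightarrow> coords s (normal_word s st) = st"
proof -
  assume st_in: "st \<in> states s"
  obtain x y k where st: "st = (x, y, k)" by (cases st)
  have x: "0 \<le> x" "x < int s" and y: "0 \<le> y" "y < int s" and k: "k < 6"
    using st_in st by (auto simp: states_def)
  have "foldl (step 0) (0, 0, 0) (wpow uw (nat x) @ wpow vw (nat y)) = (x, y, 0)"
    using walk_wpow_uw[of 0 0 0 "nat x"] walk_wpow_vw[of 0 x 0 "nat y"] x y by (simp add: coordinate_tables)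
  moreover have "foldl (step 0) (x, y, 0) (stab_word k) = (x, y, k)"
    using less_6_cases[OF k] by (auto simp: coordinate_tables)
  ultimately have "foldl (step 0) (0, 0, 0) (normal_word s st) = st"
    using x y st by (simp add: uv_word_def)
  then show ?thesis
    using walk_states_reduce[of "(0, 0, 0)" s "normal_word s st"] st_in x
    by (simp add: coords_def states_def reduce_states del: normal_word.simps)
qed

lemma wrel_iff_coords: "0 < s \<Longrightarrow> wrel s w w' \<longleftrightarrow> coords s w = coords s w'"
proof
  assume "0 < s" "wrel s w w'"
  then show "coords s w = coords s w'"
    using wrel_walk_eq[of s w w' "(0, 0, 0)"] by (simp add: coords_def states_def)
next
  assume "0 < s" "coords s w = coords s w'"
  then show "wrel s w w'"
    using wrel_normal_word_coords[of s w] wrel_normal_word_coords[of s w'] by (metis wrel.sym wrel.trans)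
qed

lemma wclass_eq_iff: "wclass s w = wclass s w' \<longleftrightarrow> wrel s w w'"
  unfolding wclass_def by (blast intro: wrel.refl wrel.sym wrel.trans)

lemma wclass_eq_iff_coords: "0 < s \<Longrightarrow> wclass s w = wclass s w' \<longleftrightarrow> coords s w = coords s w'"
  by (simp add: wclass_eq_iff wrel_iff_coords)

lemma carrier_Gs0: "carrier (Gs0 s) = range (wclass s)"
  by (simp add: Gs0_def)

lemma one_Gs0: "\<one>\<^bsub>Gs0 s\<^esub> = wclass s []"
  by (simp add: Gs0_def)

lemma mult_wclass: "wclass s w \<otimes>\<^bsub>Gs0 s\<^esub> wclass s w' = wclass s (w @ w')"
  unfolding Gs0_def wclass_def by (auto intro: wrel.refl wrel.trans wrel_append)

lemma group_Gs0: "group (Gs0 s)"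
proof (rule groupI)
  fix x assume "x \<in> carrier (Gs0 s)"
  then obtain w where "x = wclass s w" by (auto simp: carrier_Gs0)
  then have "wclass s (rev w) \<otimes>\<^bsub>Gs0 s\<^esub> x = \<one>\<^bsub>Gs0 s\<^esub>"
    by (simp add: mult_wclass one_Gs0 wclass_eq_iff wrel_rev_append)
  then show "\<exists>y\<in>carrier (Gs0 s). y \<otimes>\<^bsub>Gs0 s\<^esub> x = \<one>\<^bsub>Gs0 s\<^esub>" by (auto simp: carrier_Gs0)
qed (auto simp: carrier_Gs0 one_Gs0 mult_wclass)

lemma inv_wclass: "inv\<^bsub>Gs0 s\<^esub> (wclass s w) = wclass s (rev w)"
  by (rule group.inv_equality[OF group_Gs0])
    (auto simp: carrier_Gs0 mult_wclass one_Gs0 wclass_eq_iff wrel_rev_append)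

lemma pow_wclass: "wclass s w [^]\<^bsub>Gs0 s\<^esub> (n::nat) = wclass s (wpow w n)"
proof (induction n)
  case (Suc n)
  have "wpow w n @ w = wpow w (Suc n)" using wpow_add[of w n 1] by (simp add: wpow_def)
  then show ?case using Suc by (simp add: mult_wclass)
qed (simp add: one_Gs0 wpow_def)

lemma u_el_pow: "u_el s [^]\<^bsub>Gs0 s\<^esub> n = wclass s (uv_word s (int n) 0)"
  using wpow_mod[OF uw_period, of s n]
  by (simp add: u_el_def pow_wclass wclass_eq_iff uv_word_def wpow_def nat_mod_distrib flip: uw_def)

lemma v_el_pow: "v_el s [^]\<^bsub>Gs0 s\<^esub> n = wclass s (uv_word s 0 (int n))"
  using wpow_mod[OF vw_period, of s n]
  by (simp add: v_el_def pow_wclass wclass_eq_iff uv_word_def wpow_def nat_mod_distrib flip: vw_def)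

lemma carrier_Gs0_normal_words:
  "0 < s \<Longrightarrow> carrier (Gs0 s) = (\<lambda>st. wclass s (normal_word s st)) ` states s"
  using wrel_normal_word_coords coords_states
  by (auto simp: carrier_Gs0 wclass_eq_iff image_iff) blast

lemma inj_on_normal_words: "0 < s \<Longrightarrow> inj_on (\<lambda>st. wclass s (normal_word s st)) (states s)"
  by (rule inj_onI) (metis coords_normal_word wclass_eq_iff_coords)

lemma order_Gs0: "0 < s \<Longrightarrow> order (Gs0 s) = 6 * s * s"
  using card_image[OF inj_on_normal_words, of s]
  by (simp add: order_def carrier_Gs0_normal_words states_def card_cartesian_product)

lemma coords_uv_word: "0 < s \<Longrightarrow> coords s (uv_word s x y) = (x mod int s, y mod int s, 0)"
  using coords_normal_word[of "(x mod int s, y mod int s, 0)" s]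
  by (simp add: states_def uv_word_def stab_word_def)

lemma coords_conj_R1:
  assumes "0 < s" "coords s w = (x, y, 0)"
  shows "coords s ([R1] @ w @ [R1]) = (y, x, 0)"
proof -
  have xy: "0 \<le> x" "x < int s" "0 \<le> y" "y < int s"
    using coords_states[OF assms(1), of w] assms(2) by (auto simp: states_def)
  have "wrel s w (uv_word s x y)"
    using wrel_normal_word_coords[OF assms(1), of w] assms(2) by (simp add: stab_word_def)
  then have "coords s ([R1] @ w @ [R1]) = coords s ([R1] @ uv_word s x y @ [R1])"
    using wrel.cong assms(1) wrel_iff_coords by blast
  also have "\<dots> = reduce s (foldl (step 0) (0, 0, 0) ([R1] @ uv_word s x y @ [R1]))"
    unfolding coords_def by (rule walk_states_reduce) (simp add: states_def assms(1))
  also have "\<dots> = (y, x, 0)"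
    using xy walk_wpow_uw[of 1 0 0 "nat x"] walk_wpow_vw[of 1 0 x "nat y"]
    by (simp add: uv_word_def coordinate_tables)
  finally show ?thesis .
qed

section \<open>The subgroup generated by \<open>u\<^sup>a\<close> and \<open>v\<^sup>b\<close>\<close>

locale lcm_pair =
  fixes s a b :: nat
  assumes a_pos: "0 < a" and b_pos: "0 < b" and lcm_ab: "lcm a b = s"
begin

lemma s_pos: "0 < s"
  using lcm_pos_nat[OF a_pos b_pos] lcm_ab by simp

lemma a_dvd_s: "a dvd s"
  using lcm_ab by (metis dvd_lcm1)

lemma b_dvd_s: "b dvd s"
  using lcm_ab by (metis dvd_lcm2)

definition lattice :: "gen list set set" where
  "lattice = {wclass s (uv_word s x y) | x y. int a dvd x \<and> int b dvd y}"

lemma lattice_coordsE: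
  assumes "wclass s w \<in> lattice"
  obtains x y where "coords s w = (x, y, 0)" "int a dvd x" "int b dvd y"
proof -
  obtain x y where "wclass s w = wclass s (uv_word s x y)" "int a dvd x" "int b dvd y"
    using assms by (auto simp: lattice_def)
  then show ?thesis
    using that s_pos a_dvd_s b_dvd_s by (auto simp: wclass_eq_iff_coords coords_uv_word dvd_mod_iff)
qed

lemma subgroup_lattice: "subgroup lattice (Gs0 s)"
proof (rule group.subgroupI[OF group_Gs0])
  show "lattice \<subseteq> carrier (Gs0 s)" by (auto simp: lattice_def carrier_Gs0)
  show "lattice \<noteq> {}" by (auto simp: lattice_def)
next
  fix g assume "g \<in> lattice"
  then obtain x y where g: "g = wclass s (uv_word s x y)" "int a dvd x" "int b dvd y"
    by (auto simp: lattice_def)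
  have "wclass s (uv_word s (- x) (- y)) \<otimes>\<^bsub>Gs0 s\<^esub> g = wclass s (uv_word s 0 0)"
    using uv_word_mult[OF s_pos, of "- x" "- y" x y] by (simp add: g mult_wclass wclass_eq_iff)
  then have "inv\<^bsub>Gs0 s\<^esub> g = wclass s (uv_word s (- x) (- y))"
    by (intro group.inv_equality[OF group_Gs0]) (auto simp: g carrier_Gs0 one_Gs0 uv_word_def wpow_def)
  moreover have "int a dvd - x" "int b dvd - y" using g by simp_all
  ultimately show "inv\<^bsub>Gs0 s\<^esub> g \<in> lattice" unfolding lattice_def by blast
next
  fix g h assume "g \<in> lattice" "h \<in> lattice"
  then obtain x y x' y' where g: "g = wclass s (uv_word s x y)" "int a dvd x" "int b dvd y"
    and h: "h = wclass s (uv_word s x' y')" "int a dvd x'" "int b dvd y'"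
    by (auto simp: lattice_def)
  have "g \<otimes>\<^bsub>Gs0 s\<^esub> h = wclass s (uv_word s (x + x') (y + y'))"
    using uv_word_mult[OF s_pos] by (simp add: g h mult_wclass wclass_eq_iff)
  moreover have "int a dvd x + x'" "int b dvd y + y'" using g h by simp_all
  ultimately show "g \<otimes>\<^bsub>Gs0 s\<^esub> h \<in> lattice" unfolding lattice_def by blast
qed

definition lattice_elem :: "nat \<times> nat \<Rightarrow> gen list set" where
  "lattice_elem = (\<lambda>(i, j). wclass s (uv_word s (int (a * i)) (int (b * j))))"

lemma lattice_eq_image: "lattice = lattice_elem ` ({..<s div a} \<times> {..<s div b})"
proof
  show "lattice \<subseteq> lattice_elem ` ({..<s div a} \<times> {..<s div b})"
  proof
    fix g assume "g \<in> lattice"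
    then obtain x y where g: "g = wclass s (uv_word s x y)" "int a dvd x" "int b dvd y"
      by (auto simp: lattice_def)
    obtain i where i: "i < s div a" "nat (x mod int s) = a * i"
      using nat_mod_multiple_index[OF s_pos a_dvd_s g(2)] .
    obtain j where j: "j < s div b" "nat (y mod int s) = b * j"
      using nat_mod_multiple_index[OF s_pos b_dvd_s g(3)] .
    have "a * i < s" "b * j < s"
      using mult_less_of_less_div a_dvd_s b_dvd_s i(1) j(1) by blast+
    then have "g = lattice_elem (i, j)"
      by (simp add: lattice_elem_def g uv_word_def i(2) j(2) flip: of_nat_mod of_nat_mult)
    then show "g \<in> lattice_elem ` ({..<s div a} \<times> {..<s div b})"
      using i(1) j(1) by blast
  qed
next
  have "lattice_elem (i, j) \<in> lattice" for i j
  proof -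
    have "int a dvd int (a * i)" "int b dvd int (b * j)" by simp_all
    then show ?thesis unfolding lattice_def lattice_elem_def by blast
  qed
  then show "lattice_elem ` ({..<s div a} \<times> {..<s div b}) \<subseteq> lattice" by auto
qed

lemma inj_on_lattice_elem: "inj_on lattice_elem ({..<s div a} \<times> {..<s div b})"
proof (rule inj_onI, clarify)
  fix i j i' j'
  assume "i < s div a" "j < s div b" "i' < s div a" "j' < s div b"
  then have "a * i < s" "b * j < s" "a * i' < s" "b * j' < s"
    using mult_less_of_less_div a_dvd_s b_dvd_s by blast+
  moreover assume "lattice_elem (i, j) = lattice_elem (i', j')"
  ultimately show "i = i' \<and> j = j'"
    using a_pos b_pos
    by (simp add: lattice_elem_def wclass_eq_iff_coords[OF s_pos] coords_uv_word[OF s_pos]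
        flip: of_nat_mod of_nat_mult)
qed

lemma card_lattice: "card lattice = (s div a) * (s div b)"
  using card_image[OF inj_on_lattice_elem] by (simp add: lattice_eq_image card_cartesian_product)

lemma generate_eq_lattice:
  "generate (Gs0 s) {u_el s [^]\<^bsub>Gs0 s\<^esub> a, v_el s [^]\<^bsub>Gs0 s\<^esub> b} = lattice"
    (is "?H = _")
proof
  show "?H \<subseteq> lattice"
    by (rule group.generate_subgroup_incl[OF group_Gs0 _ subgroup_lattice])
      (unfold u_el_pow v_el_pow lattice_def, blast intro: dvd_refl dvd_0_right)
next
  have subgroup_H: "subgroup ?H (Gs0 s)"
    by (rule group.generate_is_subgroup[OF group_Gs0]) (auto simp: u_el_pow v_el_pow carrier_Gs0)
  have pow_in_H: "g [^]\<^bsub>Gs0 s\<^esub> (n::nat) \<in> ?H"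
    if "g \<in> {u_el s [^]\<^bsub>Gs0 s\<^esub> a, v_el s [^]\<^bsub>Gs0 s\<^esub> b}" for g n
    using group.subgroup_int_pow_closed[OF group_Gs0 subgroup_H generate.incl[OF that], of "int n"]
    by (simp add: int_pow_int)
  show "lattice \<subseteq> ?H"
  proof
    fix g assume "g \<in> lattice"
    then obtain i j where "g = wclass s (uv_word s (int (a * i)) (int (b * j)))"
      by (auto simp: lattice_eq_image lattice_elem_def)
    also have "\<dots> = wclass s (uv_word s (int (a * i)) 0) \<otimes>\<^bsub>Gs0 s\<^esub> wclass s (uv_word s 0 (int (b * j)))"
      using uv_word_mult[OF s_pos, of "int (a * i)" 0 0 "int (b * j)"]
      by (simp add: mult_wclass wclass_eq_iff wrel.sym)
    also have "\<dots> = u_el s [^]\<^bsub>Gs0 s\<^esub> (a * i) \<otimes>\<^bsub>Gs0 s\<^esub> v_el s [^]\<^bsub>Gs0 s\<^esub> (b * j)"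
      by (simp add: u_el_pow v_el_pow)
    also have "\<dots> = (u_el s [^]\<^bsub>Gs0 s\<^esub> a) [^]\<^bsub>Gs0 s\<^esub> i \<otimes>\<^bsub>Gs0 s\<^esub> (v_el s [^]\<^bsub>Gs0 s\<^esub> b) [^]\<^bsub>Gs0 s\<^esub> j"
      using monoid.nat_pow_pow[OF group.is_monoid[OF group_Gs0]]
      by (simp add: u_el_def v_el_def carrier_Gs0)
    finally show "g \<in> ?H" using pow_in_H by (simp add: generate.eng)
  qed
qed

lemma card_rcosets_lattice: "card (rcosets\<^bsub>Gs0 s\<^esub> lattice) = 6 * a * b"
proof -
  have "card (rcosets\<^bsub>Gs0 s\<^esub> lattice) * ((s div a) * (s div b)) = 6 * s * s"
    using group.lagrange[OF group_Gs0 subgroup_lattice] card_lattice order_Gs0[OF s_pos] by simp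
  also have "\<dots> = (6 * a * b) * ((s div a) * (s div b))"
  proof -
    have "s = a * (s div a)" "s = b * (s div b)" using a_dvd_s b_dvd_s by simp_all
    then show ?thesis by (metis mult.assoc mult.left_commute)
  qed
  finally show ?thesis
    using s_pos a_dvd_s b_dvd_s by (simp add: dvd_div_eq_0_iff)
qed

lemma core_free_lattice: "core_free (Gs0 s) lattice"
  unfolding core_free_def
proof (intro allI impI)
  fix N assume N: "N \<lhd> Gs0 s" "N \<subseteq> lattice"
  have "g = \<one>\<^bsub>Gs0 s\<^esub>" if g: "g \<in> N" for g
  proof -
    obtain w where w: "g = wclass s w"
      using g normal_imp_subgroup[OF N(1)] subgroup.subset by (fastforce simp: carrier_Gs0)
    obtain x y where xy: "coords s w = (x, y, 0)" "int a dvd x" "int b dvd y"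
      using g N(2) w lattice_coordsE by blast
    have "wclass s [R1] \<otimes>\<^bsub>Gs0 s\<^esub> g \<otimes>\<^bsub>Gs0 s\<^esub> inv\<^bsub>Gs0 s\<^esub> wclass s [R1] \<in> N"
      using normal.inv_op_closed2[OF N(1) _ g] by (simp add: carrier_Gs0)
    then have "wclass s ([R1] @ w @ [R1]) \<in> lattice"
      using N(2) by (auto simp: w mult_wclass inv_wclass)
    then have ay: "int a dvd y" and bx: "int b dvd x"
      using coords_conj_R1[OF s_pos xy(1)] by (auto elim: lattice_coordsE)
    have "int s dvd x" "int s dvd y"
      using lcm_least[OF xy(2) bx] lcm_least[OF ay xy(3)] by (simp_all add: lcm_int_int_eq lcm_ab)
    moreover have "0 \<le> x" "x < int s" "0 \<le> y" "y < int s"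
      using coords_states[OF s_pos, of w] xy(1) by (auto simp: states_def)
    ultimately have "x = 0" "y = 0" by (simp_all add: dvd_nonneg_less_imp_zero)
    then have "coords s w = coords s []" using xy(1) by (simp add: coords_def)
    then show ?thesis by (simp add: w one_Gs0 wclass_eq_iff_coords[OF s_pos])
  qed
  then show "N = {\<one>\<^bsub>Gs0 s\<^esub>}"
    using subgroup.one_closed[OF normal_imp_subgroup[OF N(1)]] by blast
qed

end

theorem mainTheorem8:
  fixes s a b :: nat
  assumes "s \<ge> 2" and "a > 0" and "b > 0" and "lcm a b = s"
  defines "H \<equiv> generate (Gs0 s) {u_el s [^]\<^bsub>Gs0 s\<^esub> a, v_el s [^]\<^bsub>Gs0 s\<^esub> b}"
  shows "core_free (Gs0 s) H \<and> card (rcosets\<^bsub>Gs0 s\<^esub> H) = 6 * a * b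
         \<and> (\<exists>(E :: nat set) \<phi>. faithful_action (Gs0 s) E \<phi> \<and> transitive_action (Gs0 s) E \<phi>
               \<and> finite E \<and> card E = 6 * a * b)"
proof -
  interpret lcm_pair s a b using assms(2-4) by unfold_locales
  have H: "H = lattice" unfolding H_def by (rule generate_eq_lattice)
  let ?R = "rcosets\<^bsub>Gs0 s\<^esub> lattice"
  have "finite ?R" using card_rcosets_lattice a_pos b_pos by (intro card_ge_0_finite) simp
  then obtain f :: "gen list set set \<Rightarrow> nat" where f: "inj_on f ?R"
    using ex_bij_betw_finite_nat bij_betw_imp_inj_on by blast
  let ?\<phi> = "transport_action f ?R (coset_action (Gs0 s) lattice)"
  have "faithful_action (Gs0 s) (f ` ?R) ?\<phi>"
    by (rule faithful_action.faithful_action_transport[OF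
          group.coset_action_faithful[OF group_Gs0 subgroup_lattice core_free_lattice] f])
  moreover have "transitive_action (Gs0 s) (f ` ?R) ?\<phi>"
    by (rule transitive_action.transitive_action_transport[OF
          group.coset_action_transitive[OF group_Gs0 subgroup_lattice] f])
  moreover have "finite (f ` ?R)" "card (f ` ?R) = 6 * a * b"
    using \<open>finite ?R\<close> card_image[OF f] card_rcosets_lattice by simp_all
  ultimately show ?thesis
    unfolding H using core_free_lattice card_rcosets_lattice by blast
qed

end
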